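(* Let $\mathcal{A}$ and $\mathcal{U}$ be Banach algebras, $\theta$ a nonzero character on $\mathcal{A}$, and $T:\mathcal{A}\times_{\theta}\mathcal{U}\to\mathcal{A}\times_{\theta}\mathcal{U}$ a multiplier, written as $T((a,u))=(R_1(a)+S_1(u),\ R_2(a)+S_2(u))$ with linear maps $R_1:\mathcal{A}\to\mathcal{A}$, $R_2:\mathcal{A}\to\mathcal{U}$, $S_1:\mathcal{U}\to\mathcal{A}$, $S_2:\mathcal{U}\to\mathcal{U}$. Then: (i) $R_2$ and $S_2$ are continuous; (ii) $\mathfrak{S}(R_1)\subseteq\ker\theta$ and $\mathfrak{S}(S_1)\subseteq\ker\theta$.
   Context: The Lau product $\mathcal{A}\times_{\theta}\mathcal{U}$ is $\mathcal{A}\times\mathcal{U}$ with norm $\|(a,u)\|=\|a\|+\|u\|$ and product $(a,u)(a',u')=(aa',\theta(a)u'+\theta(a')u+uu')$. A multiplier on a Banach algebra $\mathcal{B}$ is a linear map $T$ with $xT(y)=T(x)y$ for all $x,y\in\mathcal{B}$. For a linear map $L:\mathcal{E}\to\mathcal{F}$ between Banach spaces, $\mathfrak{S}(L)=\{y\in\mathcal{F}:\exists (x_n)\subseteq\mathcal{E},\ x_n\to0,\ L(x_n)\to y\}$. *)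

theory Defs
  imports "HOL-Analysis.Analysis"
begin

text \<open>A complex Banach algebra: a (not necessarily unital) real Banach algebra
  together with a complex scalar multiplication extending the real one,
  which is compatible with the ring structure and absolutely homogeneous.\<close>
definition cplx_banach_alg :: "(complex \<Rightarrow> 'a::{real_normed_algebra,banach} \<Rightarrow> 'a) \<Rightarrow> bool" where
  "cplx_banach_alg sc \<longleftrightarrow>
     (\<forall>r x. sc (complex_of_real r) x = scaleR r x) \<and>
     (\<forall>c d x. sc (c + d) x = sc c x + sc d x) \<and>
     (\<forall>c x y. sc c (x + y) = sc c x + sc c y) \<and>
     (\<forall>c d x. sc (c * d) x = sc c (sc d x)) \<and>
     (\<forall>c x. norm (sc c x) = cmod c * norm x) \<and>
     (\<forall>c x y. sc c (x * y) = sc c x * y \<and> sc c (x * y) = x * sc c y)"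

definition clinear_map :: "(complex \<Rightarrow> 'a \<Rightarrow> 'a) \<Rightarrow> (complex \<Rightarrow> 'b \<Rightarrow> 'b) \<Rightarrow> ('a::ab_group_add \<Rightarrow> 'b::ab_group_add) \<Rightarrow> bool" where
  "clinear_map scA scB f \<longleftrightarrow>
     (\<forall>x y. f (x + y) = f x + f y) \<and> (\<forall>c x. f (scA c x) = scB c (f x))"

definition character :: "(complex \<Rightarrow> 'a \<Rightarrow> 'a) \<Rightarrow> ('a::ring \<Rightarrow> complex) \<Rightarrow> bool" where
  "character scA \<theta> \<longleftrightarrow> clinear_map scA (*) \<theta> \<and> (\<forall>a b. \<theta> (a * b) = \<theta> a * \<theta> b) \<and> (\<exists>a. \<theta> a \<noteq> 0)"

definition lau_mult :: "(complex \<Rightarrow> 'u \<Rightarrow> 'u) \<Rightarrow> ('a \<Rightarrow> complex) \<Rightarrow> ('a::ring \<times> 'u::ring) \<Rightarrow> 'a \<times> 'u \<Rightarrow> 'a \<times> 'u" where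
  "lau_mult scU \<theta> p q = (fst p * fst q, scU (\<theta> (fst p)) (snd q) + scU (\<theta> (fst q)) (snd p) + snd p * snd q)"

text \<open>Multiplier: \<open>x T(y) = T(x) y\<close> (linearity is separately assumed).\<close>
definition multiplier :: "('b \<Rightarrow> 'b \<Rightarrow> 'b) \<Rightarrow> ('b \<Rightarrow> 'b) \<Rightarrow> bool" where
  "multiplier mul T \<longleftrightarrow> (\<forall>x y. mul x (T y) = mul (T x) y)"

definition separating_space :: "('a::real_normed_vector \<Rightarrow> 'b::real_normed_vector) \<Rightarrow> 'b set" where
  "separating_space L = {y. \<exists>x. x \<longlonglongrightarrow> 0 \<and> (\<lambda>n. L (x n)) \<longlonglongrightarrow> y}"

end

theory Submission
  imports Defs
begin

text \<open>Testing the multiplier identity on \<open>(a,0), (b,0)\<close> and on \<open>(a,0), (0,v)\<close> and then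
  choosing \<open>a = e\<close> with \<open>\<theta> e = 1\<close> expresses \<open>R\<^sub>2\<close> and \<open>S\<^sub>2\<close> through bounded operations:
  \<open>R\<^sub>2 b = \<theta>(b) R\<^sub>2(e)\<close> and \<open>S\<^sub>2 v = \<theta>(R\<^sub>1 e) v + R\<^sub>2(e) v\<close>. The same identities give
  \<open>\<theta> \<circ> R\<^sub>1 = \<theta>(R\<^sub>1 e) \<theta>\<close> and \<open>\<theta> \<circ> S\<^sub>1 = 0\<close>, both continuous, so the continuous map \<open>\<theta>\<close>
  vanishes on the separating spaces of \<open>R\<^sub>1\<close> and \<open>S\<^sub>1\<close>. Continuity of \<open>\<theta>\<close> itself is the
  classical \<open>|\<theta> a| \<le> \<parallel>a\<parallel>\<close>, obtained from a Neumann series that needs no unit.\<close>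

lemma cplx_banach_alg_complex: "cplx_banach_alg ((*) :: complex \<Rightarrow> complex \<Rightarrow> complex)"
  by (auto simp: cplx_banach_alg_def scaleR_conv_of_real algebra_simps norm_mult)

lemma cplx_banach_alg_scaleR: "cplx_banach_alg sc \<Longrightarrow> sc (complex_of_real r) x = r *\<^sub>R x"
  by (simp add: cplx_banach_alg_def)

lemma cplx_banach_alg_one: "cplx_banach_alg sc \<Longrightarrow> sc 1 x = x"
  using cplx_banach_alg_scaleR[of sc 1] by simp

lemma cplx_banach_alg_zero_left: "cplx_banach_alg sc \<Longrightarrow> sc 0 x = 0"
  using cplx_banach_alg_scaleR[of sc 0] by simp

lemma cplx_banach_alg_zero_right: "cplx_banach_alg sc \<Longrightarrow> sc c 0 = 0"
  unfolding cplx_banach_alg_def by (metis add_cancel_right_right)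

lemma cplx_banach_alg_norm: "cplx_banach_alg sc \<Longrightarrow> norm (sc c x) = cmod c * norm x"
  by (simp add: cplx_banach_alg_def)

lemma clinear_map_linear:
  assumes "cplx_banach_alg scA" "cplx_banach_alg scB" "clinear_map scA scB f"
  shows "linear f"
proof (rule linearI)
  show "f (x + y) = f x + f y" for x y
    using assms(3) by (simp add: clinear_map_def)
  show "f (r *\<^sub>R x) = r *\<^sub>R f x" for r x
  proof -
    have "f (r *\<^sub>R x) = f (scA (complex_of_real r) x)" using assms(1) by (simp add: cplx_banach_alg_scaleR)
    also have "\<dots> = scB (complex_of_real r) (f x)" using assms(3) by (simp add: clinear_map_def)
    finally show ?thesis using assms(2) by (simp add: cplx_banach_alg_scaleR)
  qed
qed

lemma clinear_map_bounded_linear: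
  assumes "cplx_banach_alg scA" "cplx_banach_alg scB" "clinear_map scA scB f"
    and "\<And>x. norm (f x) \<le> norm x * K"
  shows "bounded_linear f"
proof -
  interpret linear f using clinear_map_linear[OF assms(1-3)] .
  show ?thesis by (rule bounded_linear_intro[where K = K]) (use add scale assms(4) in auto)
qed

lemma quasi_inverse_of_norm_less_one:
  fixes b :: "'a::{real_normed_algebra,banach}"
  assumes "norm b < 1"
  shows "\<exists>c. c = b + b * c"
proof -
  define p where "p n = ((*) b ^^ n) b" for n
  have p_Suc: "p (Suc n) = b * p n" for n by (simp add: p_def)
  have norm_p: "norm (p n) \<le> norm b ^ Suc n" for n
  proof (induction n)
    case 0 show ?case by (simp add: p_def)
  next
    case (Suc n)
    have "norm (p (Suc n)) \<le> norm b * norm (p n)" by (simp add: p_Suc norm_mult_ineq)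
    also have "\<dots> \<le> norm b * norm b ^ Suc n" using Suc by (simp add: mult_left_mono)
    finally show ?case by simp
  qed
  have "summable (\<lambda>n. norm b ^ Suc n)" using assms by (simp add: summable_geometric)
  then have summable_p: "summable p" by (rule summable_comparison_test') (use norm_p in auto)
  have "(\<Sum>n. p (Suc n)) = suminf p - b"
    using suminf_split_head[OF summable_p] by (simp add: p_def)
  moreover have "(\<Sum>n. p (Suc n)) = b * suminf p"
    unfolding p_Suc by (rule suminf_mult[OF summable_p])
  ultimately have "suminf p = b + b * suminf p" by (simp add: algebra_simps)
  then show ?thesis ..
qed

lemma character_exists_one:
  assumes "character scA \<theta>"
  obtains e where "\<theta> e = 1"
proof -
  obtain a where "\<theta> a \<noteq> 0" using assms by (auto simp: character_def)
  with assms have "\<theta> (scA (inverse (\<theta> a)) a) = 1"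
    by (simp add: character_def clinear_map_def)
  then show ?thesis by (rule that)
qed

lemma character_norm_le:
  fixes scA :: "complex \<Rightarrow> 'a::{real_normed_algebra,banach} \<Rightarrow> 'a"
  assumes A: "cplx_banach_alg scA" and \<theta>: "character scA \<theta>"
  shows "cmod (\<theta> a) \<le> norm a"
proof (rule ccontr)
  assume "\<not> cmod (\<theta> a) \<le> norm a"
  then have less: "norm a < cmod (\<theta> a)" and nonzero: "\<theta> a \<noteq> 0" by auto
  define b where "b = scA (inverse (\<theta> a)) a"
  have "\<theta> b = 1" using \<theta> nonzero by (simp add: b_def character_def clinear_map_def)
  have "norm b = norm a / cmod (\<theta> a)"
    using cplx_banach_alg_norm[OF A] by (simp add: b_def norm_inverse divide_inverse mult.commute)
  with less nonzero have "norm b < 1" by (simp add: divide_less_eq)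
  then obtain c where "c = b + b * c" using quasi_inverse_of_norm_less_one by blast
  then have "\<theta> c = \<theta> b + \<theta> b * \<theta> c"
    using \<theta> by (metis character_def clinear_map_def)
  with \<open>\<theta> b = 1\<close> show False by simp
qed

lemma character_bounded_linear:
  fixes scA :: "complex \<Rightarrow> 'a::{real_normed_algebra,banach} \<Rightarrow> 'a"
  assumes "cplx_banach_alg scA" and "character scA \<theta>"
  shows "bounded_linear \<theta>"
proof (rule clinear_map_bounded_linear[OF assms(1) cplx_banach_alg_complex, where K = 1])
  show "clinear_map scA (*) \<theta>" using assms(2) by (simp add: character_def)
  show "norm (\<theta> x) \<le> norm x * 1" for x using character_norm_le[OF assms] by simp
qed

lemma separating_space_subset_kernel:
  assumes "bounded_linear \<phi>" and "bounded_linear (\<lambda>x. \<phi> (L x))"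
  shows "separating_space L \<subseteq> {y. \<phi> y = 0}"
proof
  fix y assume "y \<in> separating_space L"
  then obtain x where "x \<longlonglongrightarrow> 0" and "(\<lambda>n. L (x n)) \<longlonglongrightarrow> y"
    by (auto simp: separating_space_def)
  have "(\<lambda>n. \<phi> (L (x n))) \<longlonglongrightarrow> \<phi> y"
    using bounded_linear.tendsto[OF assms(1) \<open>(\<lambda>n. L (x n)) \<longlonglongrightarrow> y\<close>] .
  moreover have "(\<lambda>n. \<phi> (L (x n))) \<longlonglongrightarrow> 0"
    using bounded_linear.tendsto_zero[OF assms(2) \<open>x \<longlonglongrightarrow> 0\<close>] .
  ultimately show "y \<in> {y. \<phi> y = 0}" using LIMSEQ_unique by auto
qed

locale lau_multiplier =
  fixes scA :: "complex \<Rightarrow> 'a::{real_normed_algebra,banach} \<Rightarrow> 'a"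
    and scU :: "complex \<Rightarrow> 'u::{real_normed_algebra,banach} \<Rightarrow> 'u"
    and \<theta> :: "'a \<Rightarrow> complex"
    and T :: "'a \<times> 'u \<Rightarrow> 'a \<times> 'u"
    and R1 :: "'a \<Rightarrow> 'a" and R2 :: "'a \<Rightarrow> 'u" and S1 :: "'u \<Rightarrow> 'a" and S2 :: "'u \<Rightarrow> 'u"
  assumes A: "cplx_banach_alg scA" and U: "cplx_banach_alg scU"
    and \<theta>: "character scA \<theta>"
    and R1: "clinear_map scA scA R1" and R2: "clinear_map scA scU R2"
    and S1: "clinear_map scU scA S1" and S2: "clinear_map scU scU S2"
    and T_eq: "\<And>a u. T (a, u) = (R1 a + S1 u, R2 a + S2 u)"
    and multiplier: "multiplier (lau_mult scU \<theta>) T"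
begin

lemma \<theta>_bounded_linear: "bounded_linear \<theta>"
  using character_bounded_linear[OF A \<theta>] .

lemma \<theta>_mult: "\<theta> (a * b) = \<theta> a * \<theta> b"
  using \<theta> by (simp add: character_def)

lemma components_0: "R1 0 = 0" "R2 0 = 0" "S1 0 = 0" "S2 0 = 0" "\<theta> 0 = 0"
  using clinear_map_linear[OF A A R1] clinear_map_linear[OF A U R2]
    clinear_map_linear[OF U A S1] clinear_map_linear[OF U U S2]
    linear_0 bounded_linear.linear[OF \<theta>_bounded_linear]
  by blast+

lemmas multiplier_simps = T_eq lau_mult_def components_0
  cplx_banach_alg_zero_left[OF U] cplx_banach_alg_zero_right[OF U]

lemma multiplier_eq: "lau_mult scU \<theta> x (T y) = lau_mult scU \<theta> (T x) y"
  using multiplier unfolding multiplier_def by blast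

lemma mult_R1_commute: "a * R1 b = R1 a * b"
  using multiplier_eq[of "(a, 0)" "(b, 0)"] by (simp add: multiplier_simps)

lemma R2_scale_commute: "scU (\<theta> a) (R2 b) = scU (\<theta> b) (R2 a)"
  using multiplier_eq[of "(a, 0)" "(b, 0)"] by (simp add: multiplier_simps)

lemma mult_S1_eq_0: "a * S1 v = 0"
  using multiplier_eq[of "(a, 0)" "(0, v)"] by (simp add: multiplier_simps)

lemma S2_scale_eq: "scU (\<theta> a) (S2 v) = scU (\<theta> (R1 a)) v + R2 a * v"
  using multiplier_eq[of "(a, 0)" "(0, v)"] by (simp add: multiplier_simps)

context
  fixes e assumes e: "\<theta> e = 1"
begin

lemma R2_eq: "R2 b = scU (\<theta> b) (R2 e)"
  using R2_scale_commute[of e b] by (simp add: e cplx_banach_alg_one[OF U])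

lemma S2_eq: "S2 v = scU (\<theta> (R1 e)) v + R2 e * v"
  using S2_scale_eq[of e v] by (simp add: e cplx_banach_alg_one[OF U])

lemma \<theta>_R1_eq: "\<theta> (R1 b) = \<theta> (R1 e) * \<theta> b"
  using arg_cong[OF mult_R1_commute[of e b], of \<theta>] by (simp add: \<theta>_mult e)

end

lemma \<theta>_S1_eq_0: "\<theta> (S1 v) = 0"
proof -
  obtain e where "\<theta> e = 1" using \<theta> by (rule character_exists_one)
  then show ?thesis using arg_cong[OF mult_S1_eq_0[of e v], of \<theta>] by (simp add: \<theta>_mult components_0)
qed

lemma R2_bounded_linear: "bounded_linear R2"
proof -
  obtain e where e: "\<theta> e = 1" using \<theta> by (rule character_exists_one)
  show ?thesis
  proof (rule clinear_map_bounded_linear[OF A U R2, where K = "norm (R2 e)"])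
    show "norm (R2 x) \<le> norm x * norm (R2 e)" for x
      using character_norm_le[OF A \<theta>, of x]
      by (simp add: R2_eq[OF e, of x] cplx_banach_alg_norm[OF U] mult_right_mono)
  qed
qed

lemma S2_bounded_linear: "bounded_linear S2"
proof -
  obtain e where e: "\<theta> e = 1" using \<theta> by (rule character_exists_one)
  show ?thesis
  proof (rule clinear_map_bounded_linear[OF U U S2, where K = "cmod (\<theta> (R1 e)) + norm (R2 e)"])
    fix v
    have "norm (S2 v) \<le> norm (scU (\<theta> (R1 e)) v) + norm (R2 e * v)"
      unfolding S2_eq[OF e, of v] by (rule norm_triangle_ineq)
    also have "\<dots> \<le> cmod (\<theta> (R1 e)) * norm v + norm (R2 e) * norm v"
      by (simp add: cplx_banach_alg_norm[OF U] norm_mult_ineq)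
    finally show "norm (S2 v) \<le> norm v * (cmod (\<theta> (R1 e)) + norm (R2 e))"
      by (simp add: algebra_simps)
  qed
qed

lemma separating_space_R1: "separating_space R1 \<subseteq> {a. \<theta> a = 0}"
proof -
  obtain e where e: "\<theta> e = 1" using \<theta> by (rule character_exists_one)
  have "bounded_linear (\<lambda>b. \<theta> (R1 e) * \<theta> b)"
    using bounded_linear_mult_right bounded_linear_compose \<theta>_bounded_linear by blast
  moreover have "(\<lambda>b. \<theta> (R1 b)) = (\<lambda>b. \<theta> (R1 e) * \<theta> b)"
    using \<theta>_R1_eq[OF e] by (rule ext)
  ultimately show ?thesis
    using separating_space_subset_kernel[OF \<theta>_bounded_linear, of R1] by simp
qed

lemma separating_space_S1: "separating_space S1 \<subseteq> {a. \<theta> a = 0}"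
  using separating_space_subset_kernel[OF \<theta>_bounded_linear, of S1]
  by (simp add: \<theta>_S1_eq_0)

end

theorem theorem3p2:
  fixes scA :: "complex \<Rightarrow> 'a::{real_normed_algebra,banach} \<Rightarrow> 'a"
    and scU :: "complex \<Rightarrow> 'u::{real_normed_algebra,banach} \<Rightarrow> 'u"
    and \<theta> :: "'a \<Rightarrow> complex"
    and T :: "'a \<times> 'u \<Rightarrow> 'a \<times> 'u"
    and R1 :: "'a \<Rightarrow> 'a" and R2 :: "'a \<Rightarrow> 'u" and S1 :: "'u \<Rightarrow> 'a" and S2 :: "'u \<Rightarrow> 'u"
  assumes "cplx_banach_alg scA" and "cplx_banach_alg scU"
    and "character scA \<theta>"
    and "clinear_map scA scA R1" and "clinear_map scA scU R2"
    and "clinear_map scU scA S1" and "clinear_map scU scU S2"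
    and "\<And>a u. T (a, u) = (R1 a + S1 u, R2 a + S2 u)"
    and "multiplier (lau_mult scU \<theta>) T"
  shows "continuous_on UNIV R2 \<and> continuous_on UNIV S2 \<and>
         separating_space R1 \<subseteq> {a. \<theta> a = 0} \<and> separating_space S1 \<subseteq> {a. \<theta> a = 0}"
proof -
  interpret lau_multiplier scA scU \<theta> T R1 R2 S1 S2
    using assms by unfold_locales
  show ?thesis
    using R2_bounded_linear S2_bounded_linear separating_space_R1 separating_space_S1
    by (simp add: linear_continuous_on)
qed

end
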